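(* For every response $y$, $$\bar\pi_n(y|x)=\frac{n\,\pi_{\mathrm{gen}}(y|x)\,\phi_\beta(y|x)}{1-e^{-n}}\int_0^\infty e^{n(\Phi_\beta(s)-1)}\,e^{-s\phi_\beta(y|x)}\,ds.$$
   Context: Fix a prompt $x$, a countable response space $\mathcal{Y}$, conditional distributions $\pi_{\mathrm{target}}$ and $\pi_{\mathrm{gen}}$ (full support), a reward $r$, and $\beta>0$. Let $\phi_\beta(y|x)=\frac{\pi_{\mathrm{target}}(y|x)}{\pi_{\mathrm{gen}}(y|x)}e^{\beta r(y|x)}$ and $\Phi_\beta(s)=\mathbb{E}_{Y\sim\pi_{\mathrm{gen}}(\cdot|x)}[e^{-s\phi_\beta(Y|x)}]$ for $s\ge0$. Let $N\sim\mathrm{Poi}(n)|_{>0}$ (Poisson with mean $n$ conditioned to be positive) and, given $N$, let $Y_1,\dots,Y_N$ be i.i.d. from $\pi_{\mathrm{gen}}(\cdot|x)$; $N_y$ is the number of $j$ with $Y_j=y$ and $Z=\sum_{j=1}^N\phi_\beta(Y_j|x)$. Define $\hat\pi_N(y|x)=\mathbb{E}[N_y\phi_\beta(y|x)/Z\mid N]$ (the output distribution of sequential Monte Carlo with $N$ particles) and $\bar\pi_n(y|x)=\mathbb{E}_{N}[\hat\pi_N(y|x)]$. *)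

theory Defs
  imports "HOL-Probability.Probability"
begin

text \<open>The prompt x is fixed throughout; all conditional distributions are given
  as pmfs on the (countable) response type, implicitly conditioned on x.\<close>

definition phi :: "'y pmf \<Rightarrow> 'y pmf \<Rightarrow> ('y \<Rightarrow> real) \<Rightarrow> real \<Rightarrow> 'y \<Rightarrow> real" where
  "phi ptarget pgen r \<beta> y = pmf ptarget y / pmf pgen y * exp (\<beta> * r y)"

definition Phi :: "'y pmf \<Rightarrow> 'y pmf \<Rightarrow> ('y \<Rightarrow> real) \<Rightarrow> real \<Rightarrow> real \<Rightarrow> real" where
  "Phi ptarget pgen r \<beta> s =
     measure_pmf.expectation pgen (\<lambda>y. exp (- s * phi ptarget pgen r \<beta> y))"

text \<open>SMC output distribution with N particles:
  E[ N_y phi(y) / Z | N ] with Y_1..Y_N iid from pgen, N_y = count of y, Z = sum phi(Y_j).\<close>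
definition pihat :: "'y pmf \<Rightarrow> 'y pmf \<Rightarrow> ('y \<Rightarrow> real) \<Rightarrow> real \<Rightarrow> nat \<Rightarrow> 'y \<Rightarrow> real" where
  "pihat ptarget pgen r \<beta> N y =
     measure_pmf.expectation (replicate_pmf N pgen)
       (\<lambda>ys. real (count_list ys y) * phi ptarget pgen r \<beta> y
              / (\<Sum>j<length ys. phi ptarget pgen r \<beta> (ys ! j)))"

definition Npos :: "real \<Rightarrow> nat pmf" where
  "Npos n = cond_pmf (poisson_pmf n) {k. 0 < k}"

definition pibar :: "'y pmf \<Rightarrow> 'y pmf \<Rightarrow> ('y \<Rightarrow> real) \<Rightarrow> real \<Rightarrow> real \<Rightarrow> 'y \<Rightarrow> real" where
  "pibar ptarget pgen r \<beta> n y =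
     measure_pmf.expectation (Npos n) (\<lambda>N. pihat ptarget pgen r \<beta> N y)"

end

theory Submission
  imports Defs
begin

(* Write 1/Z as the integral of exp (-s Z) over s >= 0. Then N_y phi(y) / Z becomes an s-integral
   of N_y phi(y) prod_j exp (-s phi(Y_j)), and for i.i.d. particles the expectation of this product
   factorises: E[N_y prod_j exp (-s phi(Y_j))] = N pgen(y) exp (-s phi(y)) Phi(s)^(N-1).
   Averaging over N then evaluates the derivative of the Poisson generating function,
   sum_N P(N) N Phi^(N-1) = n exp (n (Phi - 1)) / (1 - exp (-n)).
   All integrands are nonnegative, so every exchange of expectation, series and s-integral is
   Tonelli's theorem, carried out in ennreal. *)

lemma nn_integral_exp_neg_mult_Ici:
  fixes z :: real
  assumes "z > 0"
  shows "(\<integral>\<^sup>+s\<in>{0..}. ennreal (exp (- s * z)) \<partial>lborel) = ennreal (1 / z)"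
proof -
  have "((\<lambda>s. if s \<in> {0..} then exp (- s * z) else 0) has_integral 1 / z) UNIV"
    unfolding has_integral_restrict_UNIV
    using has_integral_exp_minus_to_infinity[of z 0] assms by (simp add: mult.commute)
  moreover have "(\<lambda>s. if s \<in> {0..} then exp (- s * z) else 0) = (\<lambda>s. exp (- s * z) * indicator {0..} s)"
    by (auto simp: indicator_def)
  ultimately show ?thesis
    by (subst nn_integral_has_integral_lborel[symmetric]) (auto simp: ennreal_mult ennreal_indicator)
qed

lemma nn_integral_measure_pmf_swap:
  fixes p :: "'a::countable pmf" and f :: "'a \<Rightarrow> 'b \<Rightarrow> ennreal"
  assumes "sigma_finite_measure M" and "\<And>x. f x \<in> borel_measurable M"
  shows "(\<integral>\<^sup>+x. \<integral>\<^sup>+t. f x t \<partial>M \<partial>p) = (\<integral>\<^sup>+t. \<integral>\<^sup>+x. f x t \<partial>p \<partial>M)"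
proof -
  interpret pair_sigma_finite p M
    using assms(1) by (simp add: pair_sigma_finite_def measure_pmf.sigma_finite_measure_axioms)
  have "sets (measure_pmf p \<Otimes>\<^sub>M M) = sets (count_space UNIV \<Otimes>\<^sub>M M)"
    by (rule sets_pair_measure_cong) simp_all
  moreover have "case_prod f \<in> borel_measurable (count_space UNIV \<Otimes>\<^sub>M M)"
    by (rule measurable_pair_measure_countable1) (simp_all add: assms(2))
  ultimately have "case_prod f \<in> borel_measurable (p \<Otimes>\<^sub>M M)"
    using measurable_cong_sets by blast
  then show ?thesis
    by (rule Fubini'[symmetric])
qed

lemma set_integral_eq_enn2real_set_nn_integral:
  fixes g :: "'a \<Rightarrow> real"
  assumes [measurable]: "g \<in> borel_measurable M" "A \<in> sets M" and "\<And>x. x \<in> A \<Longrightarrow> 0 \<le> g x"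
  shows "(LINT x:A|M. g x) = enn2real (\<integral>\<^sup>+x\<in>A. ennreal (g x) \<partial>M)"
  unfolding set_lebesgue_integral_def using assms(3)
  by (subst integral_eq_nn_integral)
     (auto intro!: arg_cong[where f = enn2real] nn_integral_cong split: split_indicator)

lemma nn_integral_eq_expectation_bounded:
  fixes p :: "'a pmf" and f :: "'a \<Rightarrow> real"
  assumes "\<And>x. 0 \<le> f x" and "\<And>x. f x \<le> B"
  shows "(\<integral>\<^sup>+x. ennreal (f x) \<partial>p) = ennreal (measure_pmf.expectation p f)"
  using assms by (intro nn_integral_eq_integral measure_pmf.integrable_const_bound[where B = B]) auto

lemma sum_list_map_pos:
  fixes f :: "'a \<Rightarrow> 'b::ordered_comm_monoid_add"
  assumes "\<And>x. f x > 0" and "xs \<noteq> []"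
  shows "sum_list (map f xs) > 0"
  using assms(2)
  by (cases xs) (auto intro!: add_pos_nonneg[OF assms(1)] sum_list_nonneg simp: less_imp_le[OF assms(1)])

lemma count_list_mult_le_sum_list:
  fixes f :: "'a \<Rightarrow> real"
  assumes "\<And>x. f x \<ge> 0"
  shows "real (count_list xs y) * f y \<le> sum_list (map f xs)"
  using assms by (induction xs) (auto simp: algebra_simps add_increasing)

lemma count_list_mult_div_sum_list_le_1:
  fixes \<phi> :: "'a \<Rightarrow> real"
  assumes "\<And>x. \<phi> x > 0"
  shows "real (count_list xs y) * \<phi> y / sum_list (map \<phi> xs) \<le> 1"
proof (cases "xs = []")
  case False
  then show ?thesis
    using assms count_list_mult_le_sum_list[of \<phi> xs y] sum_list_map_pos[of \<phi> xs]
    by (simp add: less_imp_le)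
qed simp

lemma prod_list_ennreal_exp:
  "(\<Prod>x\<leftarrow>xs. ennreal (exp (- s * f x))) = ennreal (exp (- s * sum_list (map f xs)))"
  by (induction xs) (simp_all add: ennreal_mult[symmetric] mult_exp_exp algebra_simps)

lemma nn_integral_replicate_pmf_prod_list:
  fixes g :: "'a \<Rightarrow> ennreal"
  shows "(\<integral>\<^sup>+xs. (\<Prod>x\<leftarrow>xs. g x) \<partial>replicate_pmf N p) = (\<integral>\<^sup>+x. g x \<partial>p) ^ N"
proof (induction N)
  case (Suc N)
  then show ?case
    by (simp add: nn_integral_cmult nn_integral_multc)
qed simp

lemma nn_integral_replicate_pmf_count_list_prod_list:
  fixes g :: "'a \<Rightarrow> ennreal"
  shows "(\<integral>\<^sup>+xs. of_nat (count_list xs y) * (\<Prod>x\<leftarrow>xs. g x) \<partial>replicate_pmf N p)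
       = of_nat N * ennreal (pmf p y) * g y * (\<integral>\<^sup>+x. g x \<partial>p) ^ (N - 1)"
proof (induction N)
  case (Suc N)
  define E where "E = (\<integral>\<^sup>+x. g x \<partial>p)"
  \<comment> \<open>Split \<open>count_list (x # xs) y\<close> as \<open>indicator {y} x + count_list xs y\<close>.\<close>
  have inner: "(\<integral>\<^sup>+xs. indicator {y} x * (\<Prod>z\<leftarrow>xs. g z)
                         + of_nat (count_list xs y) * (\<Prod>z\<leftarrow>xs. g z) \<partial>replicate_pmf N p)
      = indicator {y} x * E ^ N + of_nat N * ennreal (pmf p y) * g y * E ^ (N - 1)" for x
    by (simp add: nn_integral_add nn_integral_cmult nn_integral_replicate_pmf_prod_list Suc E_def)
  have "(\<integral>\<^sup>+xs. of_nat (count_list xs y) * (\<Prod>x\<leftarrow>xs. g x) \<partial>replicate_pmf (Suc N) p)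
      = (\<integral>\<^sup>+x. g x * (\<integral>\<^sup>+xs. indicator {y} x * (\<Prod>z\<leftarrow>xs. g z)
                         + of_nat (count_list xs y) * (\<Prod>z\<leftarrow>xs. g z) \<partial>replicate_pmf N p) \<partial>p)"
    by (auto simp: nn_integral_cmult[symmetric] algebra_simps split: split_indicator intro!: nn_integral_cong)
  also have "\<dots> = (\<integral>\<^sup>+x. g x * indicator {y} x * E ^ N
                         + g x * (of_nat N * ennreal (pmf p y) * g y * E ^ (N - 1)) \<partial>p)"
    by (simp add: inner distrib_left mult.assoc)
  also have "\<dots> = g y * ennreal (pmf p y) * E ^ N + of_nat N * ennreal (pmf p y) * g y * E ^ (N - 1) * E"
    by (simp add: nn_integral_add nn_integral_multc nn_integral_cmult emeasure_pmf_single E_def mult.commute)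
  also have "\<dots> = of_nat (Suc N) * ennreal (pmf p y) * g y * E ^ N"
    \<comment> \<open>at \<open>N = 0\<close> the truncated exponent \<open>N - 1\<close> is harmless because of the factor \<open>N\<close>\<close>
    by (cases N) (simp_all add: algebra_simps)
  finally show ?case by (simp add: E_def)
qed simp

lemma ennreal_count_list_mult_div_sum_list:
  fixes \<phi> :: "'a \<Rightarrow> real"
  assumes "\<And>x. \<phi> x > 0"
  shows "ennreal (real (count_list xs y) * \<phi> y / sum_list (map \<phi> xs))
       = (\<integral>\<^sup>+s\<in>{0..}. of_nat (count_list xs y) * ennreal (\<phi> y) * (\<Prod>x\<leftarrow>xs. ennreal (exp (- s * \<phi> x))) \<partial>lborel)"
proof (cases "xs = []")
  case False
  then have Z: "sum_list (map \<phi> xs) > 0"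
    using assms sum_list_map_pos by blast
  have "ennreal (real (count_list xs y) * \<phi> y / sum_list (map \<phi> xs))
      = of_nat (count_list xs y) * ennreal (\<phi> y) * ennreal (1 / sum_list (map \<phi> xs))"
    using assms[of y] Z by (simp add: ennreal_of_nat_eq_real_of_nat flip: ennreal_mult)
  also have "\<dots> = (\<integral>\<^sup>+s\<in>{0..}. of_nat (count_list xs y) * ennreal (\<phi> y)
                       * ennreal (exp (- s * sum_list (map \<phi> xs))) \<partial>lborel)"
    unfolding nn_integral_exp_neg_mult_Ici[OF Z, symmetric] by (simp add: nn_integral_cmult mult.assoc)
  finally show ?thesis
    by (simp only: prod_list_ennreal_exp)
qed simp

lemma nn_integral_replicate_pmf_count_list_div_sum_list:
  fixes p :: "'a::countable pmf" and \<phi> :: "'a \<Rightarrow> real"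
  assumes "\<And>x. \<phi> x > 0"
  shows "(\<integral>\<^sup>+xs. ennreal (real (count_list xs y) * \<phi> y / sum_list (map \<phi> xs)) \<partial>replicate_pmf N p)
       = (\<integral>\<^sup>+s\<in>{0..}. of_nat N * ennreal (pmf p y * \<phi> y * exp (- s * \<phi> y))
                       * (\<integral>\<^sup>+x. ennreal (exp (- s * \<phi> x)) \<partial>p) ^ (N - 1) \<partial>lborel)"
proof -
  let ?L = "\<lambda>xs s. of_nat (count_list xs y) * ennreal (\<phi> y) * (\<Prod>x\<leftarrow>xs. ennreal (exp (- s * \<phi> x)))"
  have "(\<integral>\<^sup>+xs. ennreal (real (count_list xs y) * \<phi> y / sum_list (map \<phi> xs)) \<partial>replicate_pmf N p)
      = (\<integral>\<^sup>+xs. \<integral>\<^sup>+s. ?L xs s * indicator {0..} s \<partial>lborel \<partial>replicate_pmf N p)"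
    by (intro nn_integral_cong ennreal_count_list_mult_div_sum_list assms)
  also have "\<dots> = (\<integral>\<^sup>+s. \<integral>\<^sup>+xs. ?L xs s * indicator {0..} s \<partial>replicate_pmf N p \<partial>lborel)"
    \<comment> \<open>measurability in \<open>s\<close> is recognised only after rewriting the product as one exponential\<close>
    unfolding prod_list_ennreal_exp
    by (rule nn_integral_measure_pmf_swap) (simp_all add: lborel.sigma_finite_measure_axioms)
  also have "\<dots> = (\<integral>\<^sup>+s\<in>{0..}. ennreal (\<phi> y) * (\<integral>\<^sup>+xs. of_nat (count_list xs y)
                       * (\<Prod>x\<leftarrow>xs. ennreal (exp (- s * \<phi> x))) \<partial>replicate_pmf N p) \<partial>lborel)"
    by (simp add: nn_integral_multc nn_integral_cmult mult_ac)
  also have "\<dots> = (\<integral>\<^sup>+s\<in>{0..}. of_nat N * ennreal (pmf p y * \<phi> y * exp (- s * \<phi> y))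
                       * (\<integral>\<^sup>+x. ennreal (exp (- s * \<phi> x)) \<partial>p) ^ (N - 1) \<partial>lborel)"
    using assms[of y] by (simp add: nn_integral_replicate_pmf_count_list_prod_list ennreal_mult mult_ac)
  finally show ?thesis .
qed

lemma pmf_Npos:
  assumes "n > 0"
  shows "pmf (Npos n) N = (if 0 < N then n ^ N / fact N * exp (- n) / (1 - exp (- n)) else 0)"
proof -
  have nonempty: "set_pmf (poisson_pmf n) \<inter> {k. 0 < k} \<noteq> {}"
    using assms by auto
  have "measure_pmf.prob (poisson_pmf n) {k. 0 < k} = measure_pmf.prob (poisson_pmf n) (space (poisson_pmf n) - {0})"
    by (intro arg_cong[where f = "measure _"]) auto
  also have "\<dots> = 1 - exp (- n)"
    using assms by (subst measure_pmf.prob_compl) (auto simp: measure_pmf_single pmf_poisson)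
  finally show ?thesis
    using assms by (simp add: Npos_def pmf_cond[OF nonempty] pmf_poisson)
qed

lemma Npos_sums_pgf_deriv:
  assumes "n > 0"
  shows "(\<lambda>N. pmf (Npos n) N * (real N * F ^ (N - 1))) sums (n * exp (n * (F - 1)) / (1 - exp (- n)))"
proof -
  define c where "c = n * exp (- n) / (1 - exp (- n))"
  define f where "f = (\<lambda>N. pmf (Npos n) N * (real N * F ^ (N - 1)))"
  have "(\<lambda>m. c * ((n * F) ^ m / fact m)) sums (c * exp (n * F))"
    using exp_converges[of "n * F"] by (intro sums_mult) (simp add: divide_inverse mult.commute)
  moreover have "f (Suc m) = c * ((n * F) ^ m / fact m)" for m
    using assms by (simp add: f_def pmf_Npos c_def power_mult_distrib field_simps del: of_nat_Suc)
  ultimately have "(\<lambda>m. f (Suc m)) sums (c * exp (n * F))"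
    by simp
  then have "f sums (c * exp (n * F))"
    by (subst (asm) sums_Suc_iff) (simp add: f_def)
  moreover have "c * exp (n * F) = n * exp (n * (F - 1)) / (1 - exp (- n))"
    by (simp add: c_def mult_exp_exp algebra_simps)
  ultimately show ?thesis
    unfolding f_def by simp
qed

lemma nn_integral_Npos_pgf_deriv:
  assumes "n > 0" and "F \<ge> 0"
  shows "(\<integral>\<^sup>+N. ennreal (real N * F ^ (N - 1)) \<partial>Npos n) = ennreal (n * exp (n * (F - 1)) / (1 - exp (- n)))"
  using assms(2) Npos_sums_pgf_deriv[OF assms(1)]
  by (simp add: nn_integral_measure_pmf nn_integral_count_space_nat suminf_ennreal_eq flip: ennreal_mult)

lemma phi_pos:
  assumes "set_pmf ptarget = UNIV" and "set_pmf pgen = UNIV"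
  shows "phi ptarget pgen r \<beta> y > 0"
  using pmf_positive[of y ptarget] pmf_positive[of y pgen] assms by (simp add: phi_def)

lemma borel_measurable_Phi [measurable]:
  fixes pgen :: "'y::countable pmf"
  shows "Phi ptarget pgen r \<beta> \<in> borel_measurable borel"
  unfolding Phi_def by (rule measure_pmf.borel_measurable_lebesgue_integral) measurable

lemma Phi_nonneg [simp]: "Phi ptarget pgen r \<beta> s \<ge> 0"
  by (simp add: Phi_def)

lemma ennreal_Phi:
  assumes "\<And>x. phi ptarget pgen r \<beta> x > 0" and "s \<ge> 0"
  shows "ennreal (Phi ptarget pgen r \<beta> s) = (\<integral>\<^sup>+x. ennreal (exp (- s * phi ptarget pgen r \<beta> x)) \<partial>pgen)"
  unfolding Phi_def using assms
  by (intro nn_integral_eq_expectation_bounded[symmetric, where B = 1])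
     (auto simp: less_imp_le intro!: mult_nonneg_nonneg)

lemma ennreal_pihat:
  fixes pgen :: "'y::countable pmf"
  assumes pos: "\<And>x. phi ptarget pgen r \<beta> x > 0"
  shows "ennreal (pihat ptarget pgen r \<beta> N y)
       = (\<integral>\<^sup>+s\<in>{0..}. ennreal (real N * pmf pgen y * phi ptarget pgen r \<beta> y
                          * exp (- s * phi ptarget pgen r \<beta> y) * Phi ptarget pgen r \<beta> s ^ (N - 1)) \<partial>lborel)"
proof -
  let ?\<phi> = "phi ptarget pgen r \<beta>"
  have sum_nth: "(\<Sum>j<length xs. ?\<phi> (xs ! j)) = sum_list (map ?\<phi> xs)" for xs
    by (simp add: sum_list_sum_nth atLeast0LessThan)
  have "ennreal (pihat ptarget pgen r \<beta> N y)
      = (\<integral>\<^sup>+xs. ennreal (real (count_list xs y) * ?\<phi> y / sum_list (map ?\<phi> xs)) \<partial>replicate_pmf N pgen)"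
    unfolding pihat_def sum_nth using pos
    by (intro nn_integral_eq_expectation_bounded[symmetric, where B = 1])
       (auto simp: count_list_mult_div_sum_list_le_1 less_imp_le intro!: divide_nonneg_nonneg sum_list_nonneg)
  also have "\<dots> = (\<integral>\<^sup>+s\<in>{0..}. of_nat N * ennreal (pmf pgen y * ?\<phi> y * exp (- s * ?\<phi> y))
                       * (\<integral>\<^sup>+x. ennreal (exp (- s * ?\<phi> x)) \<partial>pgen) ^ (N - 1) \<partial>lborel)"
    using pos by (rule nn_integral_replicate_pmf_count_list_div_sum_list)
  also have "\<dots> = (\<integral>\<^sup>+s\<in>{0..}. ennreal (real N * pmf pgen y * ?\<phi> y
                          * exp (- s * ?\<phi> y) * Phi ptarget pgen r \<beta> s ^ (N - 1)) \<partial>lborel)"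
  proof (intro set_nn_integral_cong refl)
    fix s :: real
    assume "s \<in> space lborel \<inter> {0..}"
    then show "of_nat N * ennreal (pmf pgen y * ?\<phi> y * exp (- s * ?\<phi> y))
          * (\<integral>\<^sup>+x. ennreal (exp (- s * ?\<phi> x)) \<partial>pgen) ^ (N - 1)
        = ennreal (real N * pmf pgen y * ?\<phi> y * exp (- s * ?\<phi> y) * Phi ptarget pgen r \<beta> s ^ (N - 1))"
      using pos[of y]
      by (simp add: ennreal_Phi[OF pos] ennreal_mult ennreal_of_nat_eq_real_of_nat mult_ac flip: ennreal_power)
  qed
  finally show ?thesis .
qed

lemma nn_integral_Npos_pihat:
  fixes pgen :: "'y::countable pmf"
  assumes "n > 0" and pos: "\<And>x. phi ptarget pgen r \<beta> x > 0"
  shows "(\<integral>\<^sup>+N. ennreal (pihat ptarget pgen r \<beta> N y) \<partial>Npos n)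
       = (\<integral>\<^sup>+s\<in>{0..}. ennreal (n * pmf pgen y * phi ptarget pgen r \<beta> y / (1 - exp (- n))
            * (exp (n * (Phi ptarget pgen r \<beta> s - 1)) * exp (- s * phi ptarget pgen r \<beta> y))) \<partial>lborel)"
proof -
  let ?\<phi> = "phi ptarget pgen r \<beta>" and ?\<Phi> = "Phi ptarget pgen r \<beta>"
  let ?a = "\<lambda>s. pmf pgen y * ?\<phi> y * exp (- s * ?\<phi> y)"
  have "(\<integral>\<^sup>+N. ennreal (pihat ptarget pgen r \<beta> N y) \<partial>Npos n)
      = (\<integral>\<^sup>+N. (\<integral>\<^sup>+s\<in>{0..}. ennreal (?a s) * ennreal (real N * ?\<Phi> s ^ (N - 1)) \<partial>lborel) \<partial>Npos n)"
    using pos[of y] by (simp add: ennreal_pihat[OF pos] mult_ac flip: ennreal_mult)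
  also have "\<dots> = (\<integral>\<^sup>+s\<in>{0..}. ennreal (?a s) * (\<integral>\<^sup>+N. ennreal (real N * ?\<Phi> s ^ (N - 1)) \<partial>Npos n) \<partial>lborel)"
    by (subst nn_integral_measure_pmf_swap)
       (simp_all add: lborel.sigma_finite_measure_axioms nn_integral_cmult nn_integral_multc)
  also have "\<dots> = (\<integral>\<^sup>+s\<in>{0..}. ennreal (?a s * (n * exp (n * (?\<Phi> s - 1)) / (1 - exp (- n)))) \<partial>lborel)"
    unfolding nn_integral_Npos_pgf_deriv[OF assms(1) Phi_nonneg]
    using pos[of y] assms(1) by (simp flip: ennreal_mult)
  finally show ?thesis
    by (simp add: mult_ac)
qed

theorem lemmaD1:
  fixes ptarget pgen :: "'y::countable pmf" and r :: "'y \<Rightarrow> real"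
    and \<beta> n :: real and y :: 'y
  assumes "set_pmf ptarget = UNIV" and "set_pmf pgen = UNIV"
    and "\<beta> > 0" and "n > 0"
  shows "pibar ptarget pgen r \<beta> n y =
    n * pmf pgen y * phi ptarget pgen r \<beta> y / (1 - exp (- n)) *
    (LBINT s:{0..}. exp (n * (Phi ptarget pgen r \<beta> s - 1)) * exp (- s * phi ptarget pgen r \<beta> y))"
proof -
  have pos: "phi ptarget pgen r \<beta> x > 0" for x
    using assms(1,2) by (rule phi_pos)
  have "pibar ptarget pgen r \<beta> n y = enn2real (\<integral>\<^sup>+N. ennreal (pihat ptarget pgen r \<beta> N y) \<partial>Npos n)"
    unfolding pibar_def using pos
    by (intro integral_eq_nn_integral)
       (auto simp: pihat_def less_imp_le intro!: Bochner_Integration.integral_nonneg divide_nonneg_nonneg sum_nonneg)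
  also have "\<dots> = (LBINT s:{0..}. n * pmf pgen y * phi ptarget pgen r \<beta> y / (1 - exp (- n))
            * (exp (n * (Phi ptarget pgen r \<beta> s - 1)) * exp (- s * phi ptarget pgen r \<beta> y)))"
    unfolding nn_integral_Npos_pihat[OF assms(4) pos] using pos[of y] assms(4)
    by (intro set_integral_eq_enn2real_set_nn_integral[symmetric]) simp_all
  finally show ?thesis
    by simp
qed

end
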